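(* Let $\hat R=\begin{pmatrix}1&0&0&1\\0&1&-1&0\\0&1&1&0\\-1&0&0&1\end{pmatrix}$, $P_{(+)}=\tfrac12\big(I+i(\hat R-I)\big)$, let $a$ be a complex-valued function on a multiplicatively closed set $G\subseteq\mathbb C\setminus\{0\}$, and set $\hat R(x)=I+a(x)P_{(+)}$. Then for all $x,y\in G$, $$\hat R_{(12)}(x)\hat R_{(23)}(xy)\hat R_{(12)}(y)-\hat R_{(23)}(y)\hat R_{(12)}(xy)\hat R_{(23)}(x)=\Big(a(x)+a(y)+a(x)a(y)-a(xy)\big(1-\tfrac12a(x)a(y)\big)\Big)\big(P_{(+)12}-P_{(+)23}\big).$$ Hence $\hat R(x)$ satisfies the parametrised Yang–Baxter equation $\hat R_{(12)}(x)\hat R_{(23)}(xy)\hat R_{(12)}(y)=\hat R_{(23)}(y)\hat R_{(12)}(xy)\hat R_{(23)}(x)$ for all $x,y\in G$ if and only if $a(xy)\big(1-\tfrac12a(x)a(y)\big)=a(x)+a(y)+a(x)a(y)$ for all $x,y\in G$.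
   Context: $I$ is the identity matrix. For a $4\times4$ matrix $A$ acting on $\mathbb C^2\otimes\mathbb C^2$ (basis ordered $e_1\otimes e_1,e_1\otimes e_2,e_2\otimes e_1,e_2\otimes e_2$), $A_{(12)}=A_{12}=A\otimes I_2$ and $A_{(23)}=A_{23}=I_2\otimes A$ acting on $(\mathbb C^2)^{\otimes 3}$. *)

theory Defs
  imports Complex_Main "Jordan_Normal_Form.Matrix"
begin

text \<open>Kronecker (tensor) product of matrices, with the standard index ordering:
  row index i of the product corresponds to (i div dim_row B, i mod dim_row B).
  This matches the basis ordering e1(x)e1, e1(x)e2, e2(x)e1, e2(x)e2.\<close>
definition kron :: "'a::semiring_1 mat \<Rightarrow> 'a mat \<Rightarrow> 'a mat" where
  "kron A B = mat (dim_row A * dim_row B) (dim_col A * dim_col B)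
     (\<lambda>(i,j). A $$ (i div dim_row B, j div dim_col B) * B $$ (i mod dim_row B, j mod dim_col B))"

definition op12 :: "complex mat \<Rightarrow> complex mat" where
  "op12 A = kron A (1\<^sub>m 2)"

definition op23 :: "complex mat \<Rightarrow> complex mat" where
  "op23 A = kron (1\<^sub>m 2) A"

definition Rhat :: "complex mat" where
  "Rhat = mat_of_rows_list 4 [[1,0,0,1],[0,1,-1,0],[0,1,1,0],[-1,0,0,1]]"

definition Pplus :: "complex mat" where
  "Pplus = (1/2) \<cdot>\<^sub>m (1\<^sub>m 4 + \<i> \<cdot>\<^sub>m (Rhat - 1\<^sub>m 4))"

definition Rpar :: "(complex \<Rightarrow> complex) \<Rightarrow> complex \<Rightarrow> complex mat" where
  "Rpar a x = 1\<^sub>m 4 + a x \<cdot>\<^sub>m Pplus"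

end

theory Submission
  imports Defs
begin

(* Write P12 = op12 Pplus and P23 = op23 Pplus, so that op12 (Rpar a x) = 1 + a x P12 and
   op23 (Rpar a x) = 1 + a x P23. Both are idempotent (P(+) is a projector and op12, op23 are
   multiplicative), and an explicit 8 x 8 computation gives P12 P23 P12 - P23 P12 P23 = (P12 - P23)/2.
   For any idempotents A, B with ABA - BAB = c (A - B), multiplying out
   (1 + xA)(1 + zB)(1 + yA) - (1 + yB)(1 + zA)(1 + xB) leaves only
   (x + y + xy - z (1 - c x y)) (A - B). Since P12 - P23 is nonzero, the Yang-Baxter equation
   holds exactly when this scalar vanishes. *)

lemma dim_row_kron [simp]: "dim_row (kron A B) = dim_row A * dim_row B"
  and dim_col_kron [simp]: "dim_col (kron A B) = dim_col A * dim_col B"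
  by (simp_all add: kron_def)

lemma index_kron [simp]:
  "i < dim_row A * dim_row B \<Longrightarrow> j < dim_col A * dim_col B \<Longrightarrow>
   kron A B $$ (i, j) = A $$ (i div dim_row B, j div dim_col B) * B $$ (i mod dim_row B, j mod dim_col B)"
  by (simp add: kron_def)

lemma less_mult_imp_mod_less: "i < m * n \<Longrightarrow> i mod n < (n::nat)"
  by (cases "n = 0") auto

lemma sum_lessThan_mult_div_mod:
  fixes n q :: nat
  shows "(\<Sum>k<n * q. f (k div q) (k mod q)) = (\<Sum>u<n. \<Sum>v<q. f u v)"
proof -
  have "(\<Sum>k<n * q. f (k div q) (k mod q)) = (\<Sum>(u, v)\<in>{..<n} \<times> {..<q}. f u v)"
  proof (rule sum.reindex_bij_witness[where i = "\<lambda>(u, v). u * q + v" and j = "\<lambda>k. (k div q, k mod q)"])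
    show "(k div q, k mod q) \<in> {..<n} \<times> {..<q}" if "k \<in> {..<n * q}" for k
      using that by (simp add: less_mult_imp_div_less less_mult_imp_mod_less)
    show "(case uv of (u, v) \<Rightarrow> u * q + v) \<in> {..<n * q}" if "uv \<in> {..<n} \<times> {..<q}" for uv
    proof -
      have "u * q + v < n * q" if "u < n" "v < q" for u v
      proof -
        have "u * q + v < Suc u * q" using \<open>v < q\<close> by simp
        also have "\<dots> \<le> n * q" using \<open>u < n\<close> by (intro mult_le_mono1) simp
        finally show ?thesis .
      qed
      with that show ?thesis by auto
    qed
  qed auto
  also have "\<dots> = (\<Sum>u<n. \<Sum>v<q. f u v)"
    by (rule sum.cartesian_product[symmetric])
  finally show ?thesis .
qed

lemma kron_mult:
  fixes A B C D :: "'a::comm_semiring_1 mat"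
  assumes "A \<in> carrier_mat m n" "B \<in> carrier_mat p q" "C \<in> carrier_mat n r" "D \<in> carrier_mat q s"
  shows "kron A B * kron C D = kron (A * C) (B * D)"
proof (rule eq_matI)
  fix i j assume "i < dim_row (kron (A * C) (B * D))" "j < dim_col (kron (A * C) (B * D))"
  with assms have ij: "i < m * p" "j < r * s" by simp_all
  then have "i div p < m" "j div s < r" "i mod p < p" "j mod s < s"
    by (simp_all add: less_mult_imp_div_less less_mult_imp_mod_less)
  have "(kron A B * kron C D) $$ (i, j) =
      (\<Sum>k<n * q. A $$ (i div p, k div q) * B $$ (i mod p, k mod q) *
                   (C $$ (k div q, j div s) * D $$ (k mod q, j mod s)))"
    using assms ij by (simp add: scalar_prod_def lessThan_atLeast0 less_mult_imp_div_less less_mult_imp_mod_less)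
  also have "\<dots> = (\<Sum>u<n. \<Sum>v<q. A $$ (i div p, u) * C $$ (u, j div s) * (B $$ (i mod p, v) * D $$ (v, j mod s)))"
    by (subst sum_lessThan_mult_div_mod) (simp add: ac_simps)
  also have "\<dots> = (A * C) $$ (i div p, j div s) * (B * D) $$ (i mod p, j mod s)"
    using assms \<open>i div p < m\<close> \<open>j div s < r\<close> \<open>i mod p < p\<close> \<open>j mod s < s\<close>
    by (simp add: scalar_prod_def lessThan_atLeast0 sum_product)
  finally show "(kron A B * kron C D) $$ (i, j) = kron (A * C) (B * D) $$ (i, j)"
    using assms ij by simp
qed (use assms in simp_all)

lemma kron_one_one: "kron (1\<^sub>m m) (1\<^sub>m n) = (1\<^sub>m (m * n) :: 'a::semiring_1 mat)"
proof (rule eq_matI)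
  fix i j assume "i < dim_row (1\<^sub>m (m * n) :: 'a mat)" "j < dim_col (1\<^sub>m (m * n) :: 'a mat)"
  then have ij: "i < m * n" "j < m * n" by simp_all
  then have "i div n < m" "j div n < m" "i mod n < n" "j mod n < n"
    by (simp_all add: less_mult_imp_div_less less_mult_imp_mod_less)
  moreover have "(i div n = j div n \<and> i mod n = j mod n) \<longleftrightarrow> i = j"
    by (metis div_mult_mod_eq)
  ultimately show "kron (1\<^sub>m m) (1\<^sub>m n) $$ (i, j) = (1\<^sub>m (m * n) :: 'a mat) $$ (i, j)"
    using ij by auto
qed auto

lemma kron_add_left:
  assumes "A \<in> carrier_mat m n" "B \<in> carrier_mat m n"
  shows "kron (A + B) C = kron A C + kron B C"
  by (rule eq_matI) (use assms in \<open>auto simp: less_mult_imp_div_less distrib_right\<close>)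

lemma kron_add_right:
  assumes "B \<in> carrier_mat m n" "C \<in> carrier_mat m n"
  shows "kron A (B + C) = kron A B + kron A C"
  by (rule eq_matI) (use assms in \<open>auto simp: distrib_left less_mult_imp_mod_less\<close>)

lemma kron_smult_left: "kron (c \<cdot>\<^sub>m A) B = c \<cdot>\<^sub>m kron A B"
  by (rule eq_matI) (auto simp: less_mult_imp_div_less mult.assoc)

lemma kron_smult_right: "kron A (c \<cdot>\<^sub>m B) = c \<cdot>\<^sub>m kron (A :: 'a::comm_semiring_1 mat) B"
  by (rule eq_matI) (auto simp: ac_simps less_mult_imp_mod_less)

lemma one_plus_smult_triple_expand:
  fixes A B :: "'a::comm_ring_1 mat"
  assumes A: "A \<in> carrier_mat n n" and B: "B \<in> carrier_mat n n" and AA: "A * A = A"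
  shows "(1\<^sub>m n + x \<cdot>\<^sub>m A) * (1\<^sub>m n + z \<cdot>\<^sub>m B) * (1\<^sub>m n + y \<cdot>\<^sub>m A)
       = 1\<^sub>m n + (x + y + x * y) \<cdot>\<^sub>m A + z \<cdot>\<^sub>m B + (x * z) \<cdot>\<^sub>m (A * B) + (y * z) \<cdot>\<^sub>m (B * A)
         + (x * y * z) \<cdot>\<^sub>m (A * (B * A))"
  using A B AA
  by (simp add: add_mult_distrib_mat[of _ n n _ _ n] mult_add_distrib_mat[of _ n n _ n]
      mult_smult_distrib[of _ n n _ n] mult_smult_assoc_mat[of _ n n _ n])
    (intro eq_matI; simp add: algebra_simps)

lemma yang_baxter_defect_of_idempotents:
  fixes A B :: "'a::comm_ring_1 mat"
  assumes A: "A \<in> carrier_mat n n" and B: "B \<in> carrier_mat n n"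
    and AA: "A * A = A" and BB: "B * B = B"
    and rel: "A * (B * A) - B * (A * B) = c \<cdot>\<^sub>m (A - B)"
  shows "(1\<^sub>m n + x \<cdot>\<^sub>m A) * (1\<^sub>m n + z \<cdot>\<^sub>m B) * (1\<^sub>m n + y \<cdot>\<^sub>m A)
       - (1\<^sub>m n + y \<cdot>\<^sub>m B) * (1\<^sub>m n + z \<cdot>\<^sub>m A) * (1\<^sub>m n + x \<cdot>\<^sub>m B)
       = (x + y + x * y - z * (1 - c * x * y)) \<cdot>\<^sub>m (A - B)"
proof -
  define AB BA ABA BAB where "AB = A * B" and "BA = B * A" and "ABA = A * (B * A)" and "BAB = B * (A * B)"
  have carrier: "AB \<in> carrier_mat n n" "BA \<in> carrier_mat n n" "ABA \<in> carrier_mat n n" "BAB \<in> carrier_mat n n"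
    using A B by (simp_all add: AB_def BA_def ABA_def BAB_def)
  have rel_entry: "ABA $$ (i, j) = BAB $$ (i, j) + c * (A $$ (i, j) - B $$ (i, j))" if "i < n" "j < n" for i j
  proof -
    have "(ABA - BAB) $$ (i, j) = (c \<cdot>\<^sub>m (A - B)) $$ (i, j)"
      using rel by (simp add: ABA_def BAB_def)
    with that A B carrier show ?thesis by (simp add: algebra_simps)
  qed
  show ?thesis
    unfolding one_plus_smult_triple_expand[OF A B AA] one_plus_smult_triple_expand[OF B A BB]
    unfolding ABA_def[symmetric] BAB_def[symmetric] unfolding AB_def[symmetric] BA_def[symmetric]
    using A B carrier by (intro eq_matI) (auto simp: rel_entry algebra_simps)
qed

lemma mat_eq_iff_smult_coeff_zero:
  fixes X Y D :: "'a::idom mat"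
  assumes X: "X \<in> carrier_mat n m" and Y: "Y \<in> carrier_mat n m" and D: "D \<in> carrier_mat n m"
    and diff: "X - Y = c \<cdot>\<^sub>m D" and "D \<noteq> 0\<^sub>m n m"
  shows "X = Y \<longleftrightarrow> c = 0"
proof
  obtain i j where ij: "i < n" "j < m" and "D $$ (i, j) \<noteq> 0"
    using \<open>D \<noteq> 0\<^sub>m n m\<close> D by (metis carrier_matD eq_matI index_zero_mat zero_carrier_mat)
  assume "X = Y"
  then have "(c \<cdot>\<^sub>m D) $$ (i, j) = 0"
    using diff ij Y by (metis carrier_matD index_minus_mat minus_r_inv_mat index_zero_mat)
  with ij D \<open>D $$ (i, j) \<noteq> 0\<close> show "c = 0" by simp
next
  assume "c = 0"
  show "X = Y"
  proof (rule eq_matI)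
    fix i j assume ij: "i < dim_row Y" "j < dim_col Y"
    then have "(X - Y) $$ (i, j) = (c \<cdot>\<^sub>m D) $$ (i, j)" using diff by simp
    with ij X Y D \<open>c = 0\<close> show "X $$ (i, j) = Y $$ (i, j)" by simp
  qed (use X Y in simp_all)
qed

lemma eq_square_matI:
  assumes "dim_row A = n" "dim_col A = n" "dim_row B = n" "dim_col B = n"
    and "\<forall>i\<in>{0..<n}. \<forall>j\<in>{0..<n}. A $$ (i, j) = B $$ (i, j)"
  shows "A = B"
  using assms by (intro eq_matI) auto

lemma Pplus_carrier: "Pplus \<in> carrier_mat 4 4"
  unfolding carrier_mat_def by (simp add: Pplus_def Rhat_def mat_of_rows_list_def)

lemma Pplus_idempotent: "Pplus * Pplus = Pplus"
  by (rule eq_square_matI[where n = 4])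
    (simp_all add: Pplus_def Rhat_def mat_of_rows_list_def scalar_prod_def
      atLeastLessThan_nat_numeral field_simps)

lemma op12_carrier: "A \<in> carrier_mat n n \<Longrightarrow> op12 A \<in> carrier_mat (2 * n) (2 * n)"
  and op23_carrier: "A \<in> carrier_mat n n \<Longrightarrow> op23 A \<in> carrier_mat (2 * n) (2 * n)"
  by (auto simp: op12_def op23_def)

lemma op12_idempotent: "A \<in> carrier_mat n n \<Longrightarrow> A * A = A \<Longrightarrow> op12 A * op12 A = op12 A"
  and op23_idempotent: "A \<in> carrier_mat n n \<Longrightarrow> A * A = A \<Longrightarrow> op23 A * op23 A = op23 A"
  by (simp_all add: op12_def op23_def kron_mult[of _ n n _ 2 2 _ n _ 2] kron_mult[of _ 2 2 _ n n _ 2 _ n])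

lemma op12_one_plus_smult:
  "A \<in> carrier_mat n n \<Longrightarrow> op12 (1\<^sub>m n + c \<cdot>\<^sub>m A) = 1\<^sub>m (2 * n) + c \<cdot>\<^sub>m op12 A"
  by (simp add: op12_def kron_add_left[of _ n n] kron_smult_left kron_one_one mult.commute)

lemma op23_one_plus_smult:
  "A \<in> carrier_mat n n \<Longrightarrow> op23 (1\<^sub>m n + c \<cdot>\<^sub>m A) = 1\<^sub>m (2 * n) + c \<cdot>\<^sub>m op23 A"
  by (simp add: op23_def kron_add_right[of _ n n] kron_smult_right kron_one_one)

lemma op12_Pplus_explicit:
  "op12 Pplus = mat_of_rows_list 8
    [[1/2, 0, 0, 0, 0, 0, \<i>/2, 0], [0, 1/2, 0, 0, 0, 0, 0, \<i>/2],
     [0, 0, 1/2, 0, -\<i>/2, 0, 0, 0], [0, 0, 0, 1/2, 0, -\<i>/2, 0, 0],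
     [0, 0, \<i>/2, 0, 1/2, 0, 0, 0], [0, 0, 0, \<i>/2, 0, 1/2, 0, 0],
     [-\<i>/2, 0, 0, 0, 0, 0, 1/2, 0], [0, -\<i>/2, 0, 0, 0, 0, 0, 1/2]]"
  by (rule eq_square_matI[where n = 8])
    (simp_all add: op12_def kron_def Pplus_def Rhat_def mat_of_rows_list_def atLeastLessThan_nat_numeral)

lemma op23_Pplus_explicit:
  "op23 Pplus = mat_of_rows_list 8
    [[1/2, 0, 0, \<i>/2, 0, 0, 0, 0], [0, 1/2, -\<i>/2, 0, 0, 0, 0, 0],
     [0, \<i>/2, 1/2, 0, 0, 0, 0, 0], [-\<i>/2, 0, 0, 1/2, 0, 0, 0, 0],
     [0, 0, 0, 0, 1/2, 0, 0, \<i>/2], [0, 0, 0, 0, 0, 1/2, -\<i>/2, 0],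
     [0, 0, 0, 0, 0, \<i>/2, 1/2, 0], [0, 0, 0, 0, -\<i>/2, 0, 0, 1/2]]"
  by (rule eq_square_matI[where n = 8])
    (simp_all add: op23_def kron_def Pplus_def Rhat_def mat_of_rows_list_def atLeastLessThan_nat_numeral)

lemma Pplus_12_23_relation:
  "op12 Pplus * (op23 Pplus * op12 Pplus) - op23 Pplus * (op12 Pplus * op23 Pplus)
     = (1/2) \<cdot>\<^sub>m (op12 Pplus - op23 Pplus)"
  unfolding op12_Pplus_explicit op23_Pplus_explicit
  by (rule eq_square_matI[where n = 8])
    (simp_all add: mat_of_rows_list_def scalar_prod_def atLeastLessThan_nat_numeral)

lemma Pplus_12_23_diff_nonzero: "op12 Pplus - op23 Pplus \<noteq> 0\<^sub>m 8 8"
proof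
  assume "op12 Pplus - op23 Pplus = 0\<^sub>m 8 8"
  then have "(op12 Pplus - op23 Pplus) $$ (0, 6) = 0" by simp
  then show False
    by (simp add: op12_Pplus_explicit op23_Pplus_explicit mat_of_rows_list_def)
qed

lemma Rpar_yang_baxter_defect:
  "op12 (Rpar a x) * op23 (Rpar a z) * op12 (Rpar a y)
     - op23 (Rpar a y) * op12 (Rpar a z) * op23 (Rpar a x)
   = (a x + a y + a x * a y - a z * (1 - a x * a y / 2)) \<cdot>\<^sub>m (op12 Pplus - op23 Pplus)"
proof -
  have P12: "op12 Pplus \<in> carrier_mat 8 8" and P23: "op23 Pplus \<in> carrier_mat 8 8"
    using op12_carrier[OF Pplus_carrier] op23_carrier[OF Pplus_carrier] by simp_all
  have "op12 (Rpar a w) = 1\<^sub>m 8 + a w \<cdot>\<^sub>m op12 Pplus" "op23 (Rpar a w) = 1\<^sub>m 8 + a w \<cdot>\<^sub>m op23 Pplus" for w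
    unfolding Rpar_def using op12_one_plus_smult[OF Pplus_carrier] op23_one_plus_smult[OF Pplus_carrier]
    by simp_all
  then show ?thesis
    using yang_baxter_defect_of_idempotents[OF P12 P23
        op12_idempotent[OF Pplus_carrier Pplus_idempotent] op23_idempotent[OF Pplus_carrier Pplus_idempotent]
        Pplus_12_23_relation, of "a x" "a z" "a y"]
    by simp
qed

lemma Rpar_carrier: "Rpar a x \<in> carrier_mat 4 4"
  using Pplus_carrier by (simp add: Rpar_def)

lemma Rpar_yang_baxter_iff:
  "op12 (Rpar a x) * op23 (Rpar a z) * op12 (Rpar a y)
     = op23 (Rpar a y) * op12 (Rpar a z) * op23 (Rpar a x)
   \<longleftrightarrow> a z * (1 - a x * a y / 2) = a x + a y + a x * a y"
proof -
  have R12: "op12 (Rpar a w) \<in> carrier_mat 8 8" and R23: "op23 (Rpar a w) \<in> carrier_mat 8 8" for w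
    using op12_carrier[OF Rpar_carrier] op23_carrier[OF Rpar_carrier] by simp_all
  have "op12 (Rpar a x) * op23 (Rpar a z) * op12 (Rpar a y) \<in> carrier_mat 8 8"
    "op23 (Rpar a y) * op12 (Rpar a z) * op23 (Rpar a x) \<in> carrier_mat 8 8"
    using R12 R23 by (meson mult_carrier_mat)+
  moreover have "op12 Pplus - op23 Pplus \<in> carrier_mat 8 8"
    using op23_carrier[OF Pplus_carrier] by (simp add: minus_carrier_mat)
  ultimately have "op12 (Rpar a x) * op23 (Rpar a z) * op12 (Rpar a y)
     = op23 (Rpar a y) * op12 (Rpar a z) * op23 (Rpar a x)
     \<longleftrightarrow> a x + a y + a x * a y - a z * (1 - a x * a y / 2) = 0"
    by (rule mat_eq_iff_smult_coeff_zero[OF _ _ _ Rpar_yang_baxter_defect Pplus_12_23_diff_nonzero])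
  then show ?thesis by auto
qed

theorem mainTheorem4:
  fixes G :: "complex set" and a :: "complex \<Rightarrow> complex"
  assumes "0 \<notin> G"
    and "\<And>x y. x \<in> G \<Longrightarrow> y \<in> G \<Longrightarrow> x * y \<in> G"
  shows "(\<forall>x\<in>G. \<forall>y\<in>G.
            op12 (Rpar a x) * op23 (Rpar a (x*y)) * op12 (Rpar a y)
          - op23 (Rpar a y) * op12 (Rpar a (x*y)) * op23 (Rpar a x)
          = (a x + a y + a x * a y - a (x*y) * (1 - a x * a y / 2))
              \<cdot>\<^sub>m (op12 Pplus - op23 Pplus))
       \<and> ((\<forall>x\<in>G. \<forall>y\<in>G.
            op12 (Rpar a x) * op23 (Rpar a (x*y)) * op12 (Rpar a y)
          = op23 (Rpar a y) * op12 (Rpar a (x*y)) * op23 (Rpar a x))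
         \<longleftrightarrow> (\<forall>x\<in>G. \<forall>y\<in>G.
            a (x*y) * (1 - a x * a y / 2) = a x + a y + a x * a y))"
  using Rpar_yang_baxter_defect Rpar_yang_baxter_iff by blast

end
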